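(* Let $G$ be a finite group and $\mathcal{P}$ a prime ideal of $\mathrm{Gh}(\underline{A}_G)$. For each $H\le G$ write $\mathcal{P}(G/H)=\widetilde{A}(H)\cap\prod_{I\le H}n_{I,H}\mathbb{Z}$ with integers $n_{I,H}\ge0$. Then for all $I\le H\le G$, $n_{I,H}=n_{I,G}$.
   Context: For $H\le G$, $\widetilde{A}(H)$ is the subring of $\prod_{I\le H}\mathbb{Z}$ of tuples $(a_I)_{I\le H}$ with $a_{hIh^{-1}}=a_I$ for $h\in H$; every ideal of $\widetilde{A}(H)$ is of the form $\widetilde{A}(H)\cap\prod_{I\le H}n_I\mathbb{Z}$ with unique $n_I\ge0$ constant on $H$-conjugacy classes. $\mathrm{Gh}(\underline{A}_G)$ is the $G$-Tambara functor with $\mathrm{Gh}(\underline{A}_G)(G/H)=\widetilde{A}(H)$ and, for $H\le K$, $g\in G$, $I^g=g^{-1}Ig$: $\mathrm{res}^K_H(b)_L=b_L$; $\mathrm{tr}^K_H(a)_I=\sum_{kH\in K/H,\ I^k\le H}a_{I^k}$; $\mathrm{nm}^K_H(a)_I=\prod_{IgH\in I\backslash K/H}a_{I^g\cap H}$; $c_{g,H}(a)_J=a_{J^g}$ for $J\le gHg^{-1}$. A Tambara ideal is a collection of ideals $\mathcal{I}(G/H)$ closed under all restrictions, transfers, norms and conjugations; it is prime (Nakaoka) if it is not everything and whenever $a\in T(G/K_1)$, $b\in T(G/K_2)$ satisfy $\big(\mathrm{nm}^L_{g_1H_1g_1^{-1}}c_{g_1,H_1}\mathrm{res}^{K_1}_{H_1}(a)\big)\big(\mathrm{nm}^L_{g_2H_2g_2^{-1}}c_{g_2,H_2}\mathrm{res}^{K_2}_{H_2}(b)\big)\in\mathcal{I}(G/L)$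 for all $L,H_1,H_2\le G$, $g_1,g_2\in G$ with $H_i\le K_i$, $g_iH_ig_i^{-1}\le L$, then $a\in\mathcal{I}(G/K_1)$ or $b\in\mathcal{I}(G/K_2)$. *)

theory Defs
  imports "HOL-Algebra.Coset"
begin

(* Subgroups I of G are represented as subsets with subgroup I G; "I <= H" is
   subgroup I G \<and> I \<subseteq> H.  Elements of A~(H) are functions on subsets of G,
   vanishing off the subgroups of H and invariant under H-conjugation. *)

definition conjsub :: "('a,'b) monoid_scheme \<Rightarrow> 'a set \<Rightarrow> 'a \<Rightarrow> 'a set" where
  "conjsub G I g = {inv\<^bsub>G\<^esub> g \<otimes>\<^bsub>G\<^esub> x \<otimes>\<^bsub>G\<^esub> g | x. x \<in> I}"

definition ghost :: "('a,'b) monoid_scheme \<Rightarrow> 'a set \<Rightarrow> ('a set \<Rightarrow> int) set" where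
  "ghost G H = {a. (\<forall>I. \<not> (subgroup I G \<and> I \<subseteq> H) \<longrightarrow> a I = 0) \<and>
      (\<forall>I h. subgroup I G \<and> I \<subseteq> H \<and> h \<in> H \<longrightarrow> a (conjsub G I h) = a I)}"

definition res :: "('a,'b) monoid_scheme \<Rightarrow> 'a set \<Rightarrow> 'a set \<Rightarrow> ('a set \<Rightarrow> int) \<Rightarrow> ('a set \<Rightarrow> int)" where
  "res G K H b = (\<lambda>L. if subgroup L G \<and> L \<subseteq> H then b L else 0)"

definition tr :: "('a,'b) monoid_scheme \<Rightarrow> 'a set \<Rightarrow> 'a set \<Rightarrow> ('a set \<Rightarrow> int) \<Rightarrow> ('a set \<Rightarrow> int)" where
  "tr G K H a = (\<lambda>I. if subgroup I G \<and> I \<subseteq> K then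
      (\<Sum>C \<in> {k <#\<^bsub>G\<^esub> H | k. k \<in> K}.
         (let k = (SOME k. k \<in> C) in
            if conjsub G I k \<subseteq> H then a (conjsub G I k) else 0))
    else 0)"

definition nm :: "('a,'b) monoid_scheme \<Rightarrow> 'a set \<Rightarrow> 'a set \<Rightarrow> ('a set \<Rightarrow> int) \<Rightarrow> ('a set \<Rightarrow> int)" where
  "nm G K H a = (\<lambda>I. if subgroup I G \<and> I \<subseteq> K then
      (\<Prod>D \<in> {I <#>\<^bsub>G\<^esub> (g <#\<^bsub>G\<^esub> H) | g. g \<in> K}.
         a (conjsub G I (SOME g. g \<in> D) \<inter> H))
    else 0)"

definition cnj :: "('a,'b) monoid_scheme \<Rightarrow> 'a \<Rightarrow> 'a set \<Rightarrow> ('a set \<Rightarrow> int) \<Rightarrow> ('a set \<Rightarrow> int)" where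
  "cnj G g H a = (\<lambda>J. if subgroup J G \<and> J \<subseteq> conjsub G H (inv\<^bsub>G\<^esub> g)
      then a (conjsub G J g) else 0)"

definition ghost_ideal :: "('a,'b) monoid_scheme \<Rightarrow> 'a set \<Rightarrow> ('a set \<Rightarrow> int) set \<Rightarrow> bool" where
  "ghost_ideal G H P \<longleftrightarrow> P \<subseteq> ghost G H \<and> (\<lambda>I. 0) \<in> P \<and>
     (\<forall>a\<in>P. \<forall>b\<in>P. (\<lambda>I. a I + b I) \<in> P) \<and>
     (\<forall>a\<in>P. (\<lambda>I. - a I) \<in> P) \<and>
     (\<forall>r\<in>ghost G H. \<forall>a\<in>P. (\<lambda>I. r I * a I) \<in> P)"

definition tambara_ideal :: "('a,'b) monoid_scheme \<Rightarrow> ('a set \<Rightarrow> ('a set \<Rightarrow> int) set) \<Rightarrow> bool" where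
  "tambara_ideal G \<I> \<longleftrightarrow>
     (\<forall>H. subgroup H G \<longrightarrow> ghost_ideal G H (\<I> H)) \<and>
     (\<forall>K H b. subgroup K G \<and> subgroup H G \<and> H \<subseteq> K \<and> b \<in> \<I> K \<longrightarrow> res G K H b \<in> \<I> H) \<and>
     (\<forall>K H a. subgroup K G \<and> subgroup H G \<and> H \<subseteq> K \<and> a \<in> \<I> H \<longrightarrow> tr G K H a \<in> \<I> K) \<and>
     (\<forall>K H a. subgroup K G \<and> subgroup H G \<and> H \<subseteq> K \<and> a \<in> \<I> H \<longrightarrow> nm G K H a \<in> \<I> K) \<and>
     (\<forall>H g a. subgroup H G \<and> g \<in> carrier G \<and> a \<in> \<I> H \<longrightarrow>
         cnj G g H a \<in> \<I> (conjsub G H (inv\<^bsub>G\<^esub> g)))"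

(* prime in the sense of Nakaoka *)
definition prime_tambara_ideal :: "('a,'b) monoid_scheme \<Rightarrow> ('a set \<Rightarrow> ('a set \<Rightarrow> int) set) \<Rightarrow> bool" where
  "prime_tambara_ideal G \<I> \<longleftrightarrow> tambara_ideal G \<I> \<and>
     (\<exists>H. subgroup H G \<and> \<I> H \<noteq> ghost G H) \<and>
     (\<forall>K1 K2 a b. subgroup K1 G \<and> subgroup K2 G \<and> a \<in> ghost G K1 \<and> b \<in> ghost G K2 \<and>
        (\<forall>L H1 H2 g1 g2. subgroup L G \<and> subgroup H1 G \<and> subgroup H2 G \<and>
            H1 \<subseteq> K1 \<and> H2 \<subseteq> K2 \<and> g1 \<in> carrier G \<and> g2 \<in> carrier G \<and>
            conjsub G H1 (inv\<^bsub>G\<^esub> g1) \<subseteq> L \<and> conjsub G H2 (inv\<^bsub>G\<^esub> g2) \<subseteq> L \<longrightarrow>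
            (\<lambda>I. nm G L (conjsub G H1 (inv\<^bsub>G\<^esub> g1)) (cnj G g1 H1 (res G K1 H1 a)) I *
                 nm G L (conjsub G H2 (inv\<^bsub>G\<^esub> g2)) (cnj G g2 H2 (res G K2 H2 b)) I) \<in> \<I> L)
        \<longrightarrow> a \<in> \<I> K1 \<or> b \<in> \<I> K2)"

end

theory Submission
  imports Defs "HOL-Algebra.Left_Coset"
begin

(* Fix subgroups I <= H of G and let N be the normalizer of I. Restricting n_{I,K} times the
   indicator of the K-conjugacy class of I from level K to level H shows n_{I,H} | n_{I,K}, so
   n_{I,I} | n_{I,H} | n_{I,G}. Since I is normal in N, the indicator of {I} is a ghost element at
   the levels I and N: the transfer of n_{I,N} times it from N to G has value n_{I,N} at I, and the
   norm of n_{I,I} times it from I to N has value n_{I,I}^k there; hence n_{I,G} | n_{I,N} | n_{I,I}^k.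
   Primality closes the circle: if z >= 0 and z^2 lies in P, every product tested in the prime
   condition for the pair (z, z) has the form u v with u, v >= 0 and u^2, v^2 in P, so it lies in P
   and therefore z does. Applied to multiples of the indicator of the conjugacy class of I, this
   shows that n_{I,G} | c^k implies n_{I,G} | c for c >= 0. *)

definition conj_normalizer :: "('a, 'b) monoid_scheme \<Rightarrow> 'a set \<Rightarrow> 'a set" where
  "conj_normalizer G I = {g \<in> carrier G. conjsub G I g = I}"

definition conj_class_indicator :: "('a, 'b) monoid_scheme \<Rightarrow> 'a set \<Rightarrow> 'a set \<Rightarrow> 'a set \<Rightarrow> int" where
  "conj_class_indicator G K I J = (if \<exists>k\<in>K. J = conjsub G I k then 1 else 0)"

context group
begin

lemma conjsub_eq_image: "conjsub G I g = (\<lambda>x. inv g \<otimes> x \<otimes> g) ` I"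
  unfolding conjsub_def by blast

lemma conjsub_conjsub:
  assumes "I \<subseteq> carrier G" "a \<in> carrier G" "b \<in> carrier G"
  shows "conjsub G (conjsub G I a) b = conjsub G I (a \<otimes> b)"
proof -
  have "inv b \<otimes> (inv a \<otimes> x \<otimes> a) \<otimes> b = inv (a \<otimes> b) \<otimes> x \<otimes> (a \<otimes> b)" if "x \<in> I" for x
    using that assms by (auto simp: m_assoc inv_mult_group)
  then show ?thesis
    unfolding conjsub_eq_image image_image by (rule image_cong[OF refl])
qed

lemma conjsub_one: "I \<subseteq> carrier G \<Longrightarrow> conjsub G I \<one> = I"
  unfolding conjsub_eq_image by (auto simp: subset_iff)

lemma conjsub_conjsub_inv:
  "I \<subseteq> carrier G \<Longrightarrow> a \<in> carrier G \<Longrightarrow> conjsub G (conjsub G I a) (inv a) = I"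
  by (simp add: conjsub_conjsub conjsub_one)

lemma subgroup_conjsub:
  assumes I: "subgroup I G" and g: "g \<in> carrier G"
  shows "subgroup (conjsub G I g) G"
proof (rule subgroupI)
  have IC: "I \<subseteq> carrier G"
    using subgroup.subset[OF I] .
  then show "conjsub G I g \<subseteq> carrier G"
    unfolding conjsub_eq_image using g by auto
  show "conjsub G I g \<noteq> {}"
    unfolding conjsub_eq_image using subgroup.one_closed[OF I] by blast
  fix x y assume "x \<in> conjsub G I g" "y \<in> conjsub G I g"
  then obtain x' y' where x': "x' \<in> I" "x = inv g \<otimes> x' \<otimes> g" and y': "y' \<in> I" "y = inv g \<otimes> y' \<otimes> g"
    unfolding conjsub_eq_image by blast
  have x'y'C: "x' \<in> carrier G" "y' \<in> carrier G"
    using x'(1) y'(1) IC by auto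
  have "inv x = inv g \<otimes> inv x' \<otimes> g"
    using x'(2) x'y'C g by (simp add: inv_mult_group m_assoc)
  then show "inv x \<in> conjsub G I g"
    unfolding conjsub_eq_image using subgroup.m_inv_closed[OF I x'(1)] by blast
  have "x \<otimes> y = inv g \<otimes> (x' \<otimes> y') \<otimes> g"
    using x'(2) y'(2) x'y'C g by (simp add: m_assoc flip: m_assoc[of g "inv g"])
  then show "x \<otimes> y \<in> conjsub G I g"
    unfolding conjsub_eq_image using subgroup.m_closed[OF I x'(1) y'(1)] by blast
qed

lemma conjsub_subset_subgroup:
  "subgroup H G \<Longrightarrow> I \<subseteq> H \<Longrightarrow> h \<in> H \<Longrightarrow> conjsub G I h \<subseteq> H"
  unfolding conjsub_eq_image by (auto intro!: subgroup.m_closed subgroup.m_inv_closed)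

lemma conjsub_mem_self:
  assumes I: "subgroup I G" and h: "h \<in> I"
  shows "conjsub G I h = I"
proof
  show "conjsub G I h \<subseteq> I"
    using conjsub_subset_subgroup[OF I subset_refl h] .
  have "h \<in> carrier G" "I \<subseteq> carrier G"
    using subgroup.mem_carrier[OF I h] subgroup.subset[OF I] by auto
  then have "I = conjsub G (conjsub G I (inv h)) h"
    using conjsub_conjsub_inv[of I "inv h"] by simp
  also have "\<dots> \<subseteq> conjsub G I h"
    unfolding conjsub_eq_image[of "conjsub G I (inv h)"]
    using conjsub_subset_subgroup[OF I subset_refl subgroup.m_inv_closed[OF I h]]
    by (auto simp: conjsub_eq_image[of I])
  finally show "I \<subseteq> conjsub G I h" .
qed

lemma subgroup_conj_normalizer:
  assumes IC: "I \<subseteq> carrier G"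
  shows "subgroup (conj_normalizer G I) G"
proof (rule subgroupI)
  show "conj_normalizer G I \<subseteq> carrier G"
    unfolding conj_normalizer_def by blast
  show "conj_normalizer G I \<noteq> {}"
    unfolding conj_normalizer_def using conjsub_one[OF IC] by blast
  fix a b assume "a \<in> conj_normalizer G I" "b \<in> conj_normalizer G I"
  then have a: "a \<in> carrier G" "conjsub G I a = I" and b: "b \<in> carrier G" "conjsub G I b = I"
    unfolding conj_normalizer_def by auto
  show "inv a \<in> conj_normalizer G I"
    using conjsub_conjsub_inv[OF IC a(1)] a unfolding conj_normalizer_def by simp
  have "conjsub G I (a \<otimes> b) = conjsub G (conjsub G I a) b"
    by (rule conjsub_conjsub[symmetric, OF IC a(1) b(1)])
  then show "a \<otimes> b \<in> conj_normalizer G I"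
    using a b unfolding conj_normalizer_def by simp
qed

lemma subgroup_subset_conj_normalizer:
  assumes I: "subgroup I G"
  shows "I \<subseteq> conj_normalizer G I"
  unfolding conj_normalizer_def using conjsub_mem_self[OF I] subgroup.mem_carrier[OF I] by blast

lemma conj_class_indicator_conjsub:
  assumes K: "subgroup K G" and IC: "I \<subseteq> carrier G" and JC: "J \<subseteq> carrier G" and h: "h \<in> K"
  shows "conj_class_indicator G K I (conjsub G J h) = conj_class_indicator G K I J"
proof -
  have hC: "h \<in> carrier G"
    using subgroup.mem_carrier[OF K h] .
  have "(\<exists>k\<in>K. conjsub G J h = conjsub G I k) \<longleftrightarrow> (\<exists>k\<in>K. J = conjsub G I k)"
  proof
    assume "\<exists>k\<in>K. conjsub G J h = conjsub G I k"
    then obtain k where k: "k \<in> K" "conjsub G J h = conjsub G I k"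
      by blast
    have kC: "k \<in> carrier G"
      using subgroup.mem_carrier[OF K k(1)] .
    have "J = conjsub G (conjsub G I k) (inv h)"
      using conjsub_conjsub_inv[OF JC hC] k(2) by simp
    also have "\<dots> = conjsub G I (k \<otimes> inv h)"
      using conjsub_conjsub[OF IC kC inv_closed[OF hC]] .
    finally have "J = conjsub G I (k \<otimes> inv h)" .
    moreover have "k \<otimes> inv h \<in> K"
      using subgroup.m_closed[OF K k(1) subgroup.m_inv_closed[OF K h]] .
    ultimately show "\<exists>k\<in>K. J = conjsub G I k"
      by blast
  next
    assume "\<exists>k\<in>K. J = conjsub G I k"
    then obtain k where k: "k \<in> K" "J = conjsub G I k"
      by blast
    then have "conjsub G J h = conjsub G I (k \<otimes> h)"
      using conjsub_conjsub[OF IC subgroup.mem_carrier[OF K k(1)] hC] by simp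
    then show "\<exists>k\<in>K. conjsub G J h = conjsub G I k"
      using subgroup.m_closed[OF K k(1) h] by blast
  qed
  then show ?thesis
    unfolding conj_class_indicator_def by simp
qed

lemma smult_conj_class_indicator_in_ghost:
  assumes K: "subgroup K G" and I: "subgroup I G" "I \<subseteq> K"
  shows "(\<lambda>J. c * conj_class_indicator G K I J) \<in> ghost G K"
  unfolding ghost_def
proof (intro CollectI conjI allI impI)
  fix J assume "\<not> (subgroup J G \<and> J \<subseteq> K)"
  then show "c * conj_class_indicator G K I J = 0"
    using subgroup_conjsub[OF I(1)] conjsub_subset_subgroup[OF K I(2)] subgroup.mem_carrier[OF K]
    unfolding conj_class_indicator_def by auto
next
  fix J h assume J: "subgroup J G \<and> J \<subseteq> K \<and> h \<in> K"
  then have "conj_class_indicator G K I (conjsub G J h) = conj_class_indicator G K I J"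
    using conj_class_indicator_conjsub[OF K subgroup.subset[OF I(1)] subgroup.subset[of J G]] by blast
  then show "c * conj_class_indicator G K I (conjsub G J h) = c * conj_class_indicator G K I J"
    by simp
qed

lemma conj_class_indicator_self:
  "subgroup K G \<Longrightarrow> I \<subseteq> carrier G \<Longrightarrow> conj_class_indicator G K I I = 1"
  unfolding conj_class_indicator_def using conjsub_one subgroup.one_closed by metis

lemma conj_class_indicator_normalized:
  assumes "subgroup K G" "K \<subseteq> conj_normalizer G I" "I \<subseteq> carrier G"
  shows "conj_class_indicator G K I J = (if J = I then 1 else 0)"
  using assms conjsub_one subgroup.one_closed
  unfolding conj_class_indicator_def conj_normalizer_def by fastforce

lemma tr_conj_normalizer_at:
  assumes fin: "finite (carrier G)" and I: "subgroup I G"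
    and a: "\<And>J. J \<noteq> I \<Longrightarrow> a J = 0"
  shows "tr G (carrier G) (conj_normalizer G I) a I = a I"
proof -
  let ?M = "conj_normalizer G I"
  define f where "f C = (let k = SOME k. k \<in> C in if conjsub G I k \<subseteq> ?M then a (conjsub G I k) else 0)" for C
  define Cs where "Cs = {k <# ?M | k. k \<in> carrier G}"
  have IC: "I \<subseteq> carrier G"
    using subgroup.subset[OF I] .
  have M: "subgroup ?M G"
    using subgroup_conj_normalizer[OF IC] .
  have IM: "I \<subseteq> ?M"
    using subgroup_subset_conj_normalizer[OF I] .
  have "?M \<in> Cs"
    unfolding Cs_def using coset_join3[OF one_closed M subgroup.one_closed[OF M]] by force
  moreover have "finite Cs"
    using fin l_coset_subset_G[OF subgroup.subset[OF M]] unfolding Cs_def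
    by (auto intro: finite_subset[of _ "Pow (carrier G)"])
  \<comment> \<open>A representative of any other coset moves I, so only the coset of the normalizer contributes.\<close>
  moreover have "f C = 0" if C: "C \<in> Cs - {?M}" for C
  proof -
    obtain k0 where k0: "k0 \<in> carrier G" "C = k0 <# ?M"
      using C unfolding Cs_def by blast
    define k where "k = (SOME k. k \<in> C)"
    have "k0 \<in> C"
      using lcos_self[OF k0(1) M] k0(2) by simp
    then have "k \<in> C"
      unfolding k_def by (rule someI)
    then have C_eq: "C = k <# ?M" and kC: "k \<in> carrier G"
      using l_repr_independence[OF _ k0(1) M] l_coset_carrier[OF _ k0(1) M] k0(2) by auto
    have "conjsub G I k \<noteq> I"
    proof
      assume "conjsub G I k = I"
      then have "k \<in> ?M"
        unfolding conj_normalizer_def using kC by blast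
      then have "C = ?M"
        using C_eq coset_join3[OF kC M] by simp
      then show False
        using C by blast
    qed
    then show ?thesis
      unfolding f_def Let_def k_def[symmetric] using a by simp
  qed
  ultimately have "sum f Cs = f ?M"
    using sum.mono_neutral_right[of Cs "{?M}" f] by auto
  moreover have "f ?M = a I"
  proof -
    have "(SOME k. k \<in> ?M) \<in> ?M"
      using subgroup.one_closed[OF M] by (rule someI)
    then show ?thesis
      using IM unfolding f_def Let_def conj_normalizer_def by simp
  qed
  moreover have "tr G (carrier G) ?M a I = sum f Cs"
    unfolding tr_def f_def Cs_def using I IC by simp
  ultimately show ?thesis
    by simp
qed

lemma nm_at_normalized:
  assumes I: "subgroup I G" and H: "subgroup H G" and K: "subgroup K G"
    and IH: "I \<subseteq> H" and HK: "H \<subseteq> K" and K_normalizes: "K \<subseteq> conj_normalizer G I"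
  shows "nm G K H b I = b I ^ card {I <#> (g <# H) | g. g \<in> K}"
proof -
  have "nm G K H b I = (\<Prod>D \<in> {I <#> (g <# H) | g. g \<in> K}. b (conjsub G I (SOME g. g \<in> D) \<inter> H))"
    unfolding nm_def using I IH HK by (simp add: subset_trans)
  also have "\<dots> = (\<Prod>D \<in> {I <#> (g <# H) | g. g \<in> K}. b I)"
  proof (rule prod.cong[OF refl])
    fix D assume "D \<in> {I <#> (g <# H) | g. g \<in> K}"
    then obtain g where g: "g \<in> K" "D = I <#> (g <# H)"
      by blast
    have gC: "g \<in> carrier G"
      using subgroup.mem_carrier[OF K g(1)] .
    have "g <# H \<subseteq> K"
      using g(1) HK by (auto simp: l_coset_def intro: subgroup.m_closed[OF K])
    then have DK: "D \<subseteq> K"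
      unfolding g(2) using IH HK by (auto simp: set_mult_def intro: subgroup.m_closed[OF K])
    have "\<one> \<otimes> g \<in> D"
      unfolding g(2) set_mult_def using lcos_self[OF gC H] subgroup.one_closed[OF I] by blast
    then have "g \<in> D"
      using gC by simp
    then have "(SOME g. g \<in> D) \<in> D"
      by (rule someI)
    then have "conjsub G I (SOME g. g \<in> D) = I"
      using DK K_normalizes unfolding conj_normalizer_def by blast
    then show "b (conjsub G I (SOME g. g \<in> D) \<inter> H) = b I"
      using IH by (simp add: Int_absorb2)
  qed
  also have "\<dots> = b I ^ card {I <#> (g <# H) | g. g \<in> K}"
    by simp
  finally show ?thesis .
qed

end

lemma mult_in_ghost: "u \<in> ghost G K \<Longrightarrow> v \<in> ghost G K \<Longrightarrow> (\<lambda>J. u J * v J) \<in> ghost G K"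
  unfolding ghost_def by auto

lemma nonneg_in_ghost_if_square:
  assumes "\<And>J. 0 \<le> u J" and "(\<lambda>J. u J * u J) \<in> ghost G K"
  shows "u \<in> ghost G K"
  using assms unfolding ghost_def
  by (auto simp flip: power2_eq_square)

lemma nm_cnj_res_square:
  "nm G L H' (cnj G g H (res G K H (\<lambda>J. z J * z J))) =
   (\<lambda>J. nm G L H' (cnj G g H (res G K H z)) J * nm G L H' (cnj G g H (res G K H z)) J)"
proof -
  have "cnj G g H (res G K H (\<lambda>J. z J * z J)) =
    (\<lambda>J. cnj G g H (res G K H z) J * cnj G g H (res G K H z) J)"
    by (simp add: cnj_def res_def fun_eq_iff)
  then show ?thesis
    by (simp add: nm_def prod.distrib fun_eq_iff)
qed

lemma nm_cnj_res_nonneg: "(\<And>J. 0 \<le> z J) \<Longrightarrow> 0 \<le> nm G L H' (cnj G g H (res G K H z)) J"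
  by (auto simp: nm_def cnj_def res_def intro!: prod_nonneg)

lemma tambara_ideal_res:
  "tambara_ideal G P \<Longrightarrow> subgroup K G \<Longrightarrow> subgroup H G \<Longrightarrow> H \<subseteq> K \<Longrightarrow> b \<in> P K \<Longrightarrow> res G K H b \<in> P H"
  unfolding tambara_ideal_def by blast

lemma tambara_ideal_tr:
  "tambara_ideal G P \<Longrightarrow> subgroup K G \<Longrightarrow> subgroup H G \<Longrightarrow> H \<subseteq> K \<Longrightarrow> a \<in> P H \<Longrightarrow> tr G K H a \<in> P K"
  unfolding tambara_ideal_def by blast

lemma tambara_ideal_nm:
  "tambara_ideal G P \<Longrightarrow> subgroup K G \<Longrightarrow> subgroup H G \<Longrightarrow> H \<subseteq> K \<Longrightarrow> a \<in> P H \<Longrightarrow> nm G K H a \<in> P K"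
  unfolding tambara_ideal_def by blast

lemma tambara_ideal_cnj:
  "tambara_ideal G P \<Longrightarrow> subgroup H G \<Longrightarrow> g \<in> carrier G \<Longrightarrow> a \<in> P H \<Longrightarrow>
    cnj G g H a \<in> P (conjsub G H (inv\<^bsub>G\<^esub> g))"
  unfolding tambara_ideal_def by blast

lemma prime_tambara_idealD:
  assumes "prime_tambara_ideal G P" "subgroup K1 G" "subgroup K2 G" "a \<in> ghost G K1" "b \<in> ghost G K2"
    and "\<And>L H1 H2 g1 g2. subgroup L G \<Longrightarrow> subgroup H1 G \<Longrightarrow> subgroup H2 G \<Longrightarrow>
      H1 \<subseteq> K1 \<Longrightarrow> H2 \<subseteq> K2 \<Longrightarrow> g1 \<in> carrier G \<Longrightarrow> g2 \<in> carrier G \<Longrightarrow>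
      conjsub G H1 (inv\<^bsub>G\<^esub> g1) \<subseteq> L \<Longrightarrow> conjsub G H2 (inv\<^bsub>G\<^esub> g2) \<subseteq> L \<Longrightarrow>
      (\<lambda>I. nm G L (conjsub G H1 (inv\<^bsub>G\<^esub> g1)) (cnj G g1 H1 (res G K1 H1 a)) I *
           nm G L (conjsub G H2 (inv\<^bsub>G\<^esub> g2)) (cnj G g2 H2 (res G K2 H2 b)) I) \<in> P L"
  shows "a \<in> P K1 \<or> b \<in> P K2"
  by (rule assms(1)[unfolded prime_tambara_ideal_def, THEN conjunct2, THEN conjunct2, rule_format])
    (intro conjI allI impI assms(2-5); elim conjE; rule assms(6); assumption)

locale prime_tambara_ideal_levels = group G for G (structure) +
  fixes P :: "'a set \<Rightarrow> ('a set \<Rightarrow> int) set" and n :: "'a set \<Rightarrow> 'a set \<Rightarrow> int"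
  assumes finite_carrier: "finite (carrier G)"
    and prime: "prime_tambara_ideal G P"
    and n_nonneg: "\<lbrakk>subgroup H G; subgroup I G; I \<subseteq> H\<rbrakk> \<Longrightarrow> 0 \<le> n I H"
    and n_conjsub: "\<lbrakk>subgroup H G; subgroup I G; I \<subseteq> H; h \<in> H\<rbrakk> \<Longrightarrow> n (conjsub G I h) H = n I H"
    and P_eq: "subgroup H G \<Longrightarrow> P H = {a \<in> ghost G H. \<forall>I. subgroup I G \<and> I \<subseteq> H \<longrightarrow> n I H dvd a I}"
begin

lemma tambara: "tambara_ideal G P"
  using prime unfolding prime_tambara_ideal_def by blast

lemma P_dvd: "\<lbrakk>subgroup K G; a \<in> P K; subgroup J G; J \<subseteq> K\<rbrakk> \<Longrightarrow> n J K dvd a J"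
  using P_eq by blast

lemma P_in_ghost: "\<lbrakk>subgroup K G; a \<in> P K\<rbrakk> \<Longrightarrow> a \<in> ghost G K"
  using P_eq by blast

lemma P_memI:
  "\<lbrakk>subgroup K G; a \<in> ghost G K; \<And>J. \<lbrakk>subgroup J G; J \<subseteq> K\<rbrakk> \<Longrightarrow> n J K dvd a J\<rbrakk> \<Longrightarrow> a \<in> P K"
  using P_eq by blast

lemma smult_conj_class_indicator_in_P:
  assumes K: "subgroup K G" and I: "subgroup I G" "I \<subseteq> K" and c: "n I K dvd c"
  shows "(\<lambda>J. c * conj_class_indicator G K I J) \<in> P K"
proof (rule P_memI[OF K smult_conj_class_indicator_in_ghost[OF K I]])
  fix J assume J: "subgroup J G" "J \<subseteq> K"
  show "n J K dvd c * conj_class_indicator G K I J"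
  proof (cases "\<exists>k\<in>K. J = conjsub G I k")
    case True
    then obtain k where "k \<in> K" "J = conjsub G I k"
      by blast
    then have "n J K = n I K"
      using n_conjsub[OF K I] by blast
    then show ?thesis
      using c by simp
  next
    case False
    then show ?thesis
      unfolding conj_class_indicator_def by simp
  qed
qed

lemma n_dvd_n_of_subset:
  assumes I: "subgroup I G" and H: "subgroup H G" and K: "subgroup K G"
    and IH: "I \<subseteq> H" and HK: "H \<subseteq> K"
  shows "n I H dvd n I K"
proof -
  let ?a = "\<lambda>J. n I K * conj_class_indicator G K I J"
  have "?a \<in> P K"
    using smult_conj_class_indicator_in_P[OF K I subset_trans[OF IH HK] dvd_refl] .
  then have "res G K H ?a \<in> P H"
    by (rule tambara_ideal_res[OF tambara K H HK])
  then have "n I H dvd res G K H ?a I"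
    by (rule P_dvd[OF H _ I IH])
  moreover have "res G K H ?a I = n I K"
    unfolding res_def using I IH conj_class_indicator_self[OF K subgroup.subset[OF I]] by simp
  ultimately show ?thesis
    by simp
qed

lemma n_carrier_dvd_n_conj_normalizer:
  assumes I: "subgroup I G"
  shows "n I (carrier G) dvd n I (conj_normalizer G I)"
proof -
  let ?M = "conj_normalizer G I"
  let ?a = "\<lambda>J. n I ?M * conj_class_indicator G ?M I J"
  have IC: "I \<subseteq> carrier G"
    using subgroup.subset[OF I] .
  have M: "subgroup ?M G"
    using subgroup_conj_normalizer[OF IC] .
  have IM: "I \<subseteq> ?M"
    using subgroup_subset_conj_normalizer[OF I] .
  have "?a \<in> P ?M"
    by (rule smult_conj_class_indicator_in_P[OF M I IM dvd_refl])
  then have "tr G (carrier G) ?M ?a \<in> P (carrier G)"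
    by (rule tambara_ideal_tr[OF tambara subgroup_self M subgroup.subset[OF M]])
  then have "n I (carrier G) dvd tr G (carrier G) ?M ?a I"
    by (rule P_dvd[OF subgroup_self _ I IC])
  also have "tr G (carrier G) ?M ?a I = ?a I"
    by (rule tr_conj_normalizer_at[OF finite_carrier I])
      (simp add: conj_class_indicator_normalized[OF M subset_refl IC])
  also have "?a I = n I ?M"
    by (simp add: conj_class_indicator_self[OF M IC])
  finally show ?thesis .
qed

lemma n_conj_normalizer_dvd_power:
  assumes I: "subgroup I G"
  obtains k where "n I (conj_normalizer G I) dvd n I I ^ k"
proof -
  let ?M = "conj_normalizer G I"
  let ?b = "\<lambda>J. n I I * conj_class_indicator G I I J"
  have M: "subgroup ?M G"
    using subgroup_conj_normalizer[OF subgroup.subset[OF I]] .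
  have IM: "I \<subseteq> ?M"
    using subgroup_subset_conj_normalizer[OF I] .
  have "?b \<in> P I"
    by (rule smult_conj_class_indicator_in_P[OF I I subset_refl dvd_refl])
  then have "nm G ?M I ?b \<in> P ?M"
    by (rule tambara_ideal_nm[OF tambara M I IM])
  then have "n I ?M dvd nm G ?M I ?b I"
    by (rule P_dvd[OF M _ I IM])
  also have "nm G ?M I ?b I = ?b I ^ card {I <#> (g <# I) | g. g \<in> ?M}"
    by (rule nm_at_normalized[OF I I M subset_refl IM subset_refl])
  also have "?b I = n I I"
    by (simp add: conj_class_indicator_self[OF I subgroup.subset[OF I]])
  finally show ?thesis
    by (rule that)
qed

lemma P_mult_of_squares:
  assumes L: "subgroup L G" and u: "u \<in> ghost G L" and v: "v \<in> ghost G L"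
    and uu: "(\<lambda>J. u J * u J) \<in> P L" and vv: "(\<lambda>J. v J * v J) \<in> P L"
  shows "(\<lambda>J. u J * v J) \<in> P L"
proof (rule P_memI[OF L mult_in_ghost[OF u v]])
  fix J assume J: "subgroup J G" "J \<subseteq> L"
  have "n J L dvd u J * u J" "n J L dvd v J * v J"
    using P_dvd[OF L uu J] P_dvd[OF L vv J] by simp_all
  then have "n J L ^ 2 dvd (u J * v J) ^ 2"
    using mult_dvd_mono by (fastforce simp: power2_eq_square ac_simps)
  then show "n J L dvd u J * v J"
    by simp
qed

lemma nonneg_in_P_if_square:
  assumes K: "subgroup K G" and z: "z \<in> ghost G K" and z_nonneg: "\<And>J. 0 \<le> z J"
    and zz: "(\<lambda>J. z J * z J) \<in> P K"
  shows "z \<in> P K"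
proof -
  let ?T = "\<lambda>L H g. nm G L (conjsub G H (inv g)) (cnj G g H (res G K H z))"
  have T_square_in_P: "(\<lambda>J. ?T L H g J * ?T L H g J) \<in> P L"
    if "subgroup L G" "subgroup H G" "H \<subseteq> K" "g \<in> carrier G" "conjsub G H (inv g) \<subseteq> L" for L H g
  proof -
    have "res G K H (\<lambda>J. z J * z J) \<in> P H"
      by (rule tambara_ideal_res[OF tambara K that(2,3) zz])
    then have "cnj G g H (res G K H (\<lambda>J. z J * z J)) \<in> P (conjsub G H (inv g))"
      by (rule tambara_ideal_cnj[OF tambara that(2,4)])
    then have "nm G L (conjsub G H (inv g)) (cnj G g H (res G K H (\<lambda>J. z J * z J))) \<in> P L"
      by (rule tambara_ideal_nm[OF tambara that(1) subgroup_conjsub[OF that(2) inv_closed[OF that(4)]] that(5)])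
    then show ?thesis
      unfolding nm_cnj_res_square .
  qed
  have T_in_ghost: "?T L H g \<in> ghost G L"
    if "subgroup L G" "subgroup H G" "H \<subseteq> K" "g \<in> carrier G" "conjsub G H (inv g) \<subseteq> L" for L H g
  proof (rule nonneg_in_ghost_if_square)
    show "0 \<le> ?T L H g J" for J
      by (rule nm_cnj_res_nonneg[OF z_nonneg])
    show "(\<lambda>J. ?T L H g J * ?T L H g J) \<in> ghost G L"
      using P_in_ghost[OF that(1) T_square_in_P[OF that]] .
  qed
  have "z \<in> P K \<or> z \<in> P K"
  proof (rule prime_tambara_idealD[OF prime K K z z])
    fix L H1 H2 g1 g2
    assume a: "subgroup L G" "subgroup H1 G" "subgroup H2 G" "H1 \<subseteq> K" "H2 \<subseteq> K"
      "g1 \<in> carrier G" "g2 \<in> carrier G" "conjsub G H1 (inv g1) \<subseteq> L" "conjsub G H2 (inv g2) \<subseteq> L"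
    show "(\<lambda>J. ?T L H1 g1 J * ?T L H2 g2 J) \<in> P L"
      by (rule P_mult_of_squares[OF a(1) T_in_ghost[OF a(1,2,4,6,8)] T_in_ghost[OF a(1,3,5,7,9)]
            T_square_in_P[OF a(1,2,4,6,8)] T_square_in_P[OF a(1,3,5,7,9)]])
  qed
  then show ?thesis
    by blast
qed

lemma n_dvd_if_dvd_power:
  assumes I: "subgroup I G" and K: "subgroup K G" and IK: "I \<subseteq> K"
    and c: "0 \<le> c" and dvd_power: "n I K dvd c ^ k"
  shows "n I K dvd c"
proof -
  have dvd_if_dvd_square: "n I K dvd x" if x: "0 \<le> x" "n I K dvd x * x" for x
  proof -
    let ?z = "\<lambda>J. x * conj_class_indicator G K I J"
    have z_nonneg: "0 \<le> ?z J" for J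
      using x(1) by (simp add: conj_class_indicator_def)
    have "(\<lambda>J. ?z J * ?z J) = (\<lambda>J. (x * x) * conj_class_indicator G K I J)"
      by (simp add: conj_class_indicator_def fun_eq_iff)
    moreover have "(\<lambda>J. (x * x) * conj_class_indicator G K I J) \<in> P K"
      by (rule smult_conj_class_indicator_in_P[OF K I IK x(2)])
    ultimately have "(\<lambda>J. ?z J * ?z J) \<in> P K"
      by (simp only:)
    then have "?z \<in> P K"
      by (rule nonneg_in_P_if_square[OF K smult_conj_class_indicator_in_ghost[OF K I IK] z_nonneg])
    then have "n I K dvd ?z I"
      by (rule P_dvd[OF K _ I IK])
    then show ?thesis
      by (simp add: conj_class_indicator_self[OF K subgroup.subset[OF I]])
  qed
  have "n I K dvd c" if "n I K dvd c ^ (2 ^ j)" for j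
    using that
  proof (induction j)
    case 0
    then show ?case
      by simp
  next
    case (Suc j)
    have "c ^ (2 ^ Suc j) = c ^ (2 ^ j) * c ^ (2 ^ j)"
      by (simp add: mult_2 power_add)
    then have "n I K dvd c ^ (2 ^ j) * c ^ (2 ^ j)"
      using Suc.prems by simp
    then have "n I K dvd c ^ (2 ^ j)"
      by (rule dvd_if_dvd_square[OF zero_le_power[OF c]])
    then show ?case
      by (rule Suc.IH)
  qed
  moreover have "c ^ k dvd c ^ (2 ^ k)"
    by (rule le_imp_power_dvd[OF less_imp_le[OF less_exp]])
  ultimately show ?thesis
    using dvd_power dvd_trans by blast
qed

end

theorem proposition4p5:
  fixes G :: "('a,'b) monoid_scheme"
    and P :: "'a set \<Rightarrow> ('a set \<Rightarrow> int) set"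
    and n :: "'a set \<Rightarrow> 'a set \<Rightarrow> int"
  assumes "group G" and "finite (carrier G)"
    and "prime_tambara_ideal G P"
    and "\<forall>H I. subgroup H G \<and> subgroup I G \<and> I \<subseteq> H \<longrightarrow>
            n I H \<ge> 0 \<and> (\<forall>h\<in>H. n (conjsub G I h) H = n I H)"
    and "\<forall>H. subgroup H G \<longrightarrow>
            P H = {a \<in> ghost G H. \<forall>I. subgroup I G \<and> I \<subseteq> H \<longrightarrow> n I H dvd a I}"
  shows "\<forall>I H. subgroup H G \<and> subgroup I G \<and> I \<subseteq> H \<longrightarrow> n I H = n I (carrier G)"
proof (intro allI impI)
  interpret prime_tambara_ideal_levels G P n
    by (intro prime_tambara_ideal_levels.intro prime_tambara_ideal_levels_axioms.intro)
      (use assms in auto)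
  fix I H assume "subgroup H G \<and> subgroup I G \<and> I \<subseteq> H"
  then have H: "subgroup H G" and I: "subgroup I G" and IH: "I \<subseteq> H"
    by auto
  have HC: "H \<subseteq> carrier G" and IC: "I \<subseteq> carrier G"
    using subgroup.subset[OF H] subgroup.subset[OF I] .
  have "n I H dvd n I (carrier G)"
    by (rule n_dvd_n_of_subset[OF I H subgroup_self IH HC])
  moreover obtain k where "n I (conj_normalizer G I) dvd n I I ^ k"
    using n_conj_normalizer_dvd_power[OF I] .
  with n_carrier_dvd_n_conj_normalizer[OF I] have "n I (carrier G) dvd n I I ^ k"
    by (rule dvd_trans)
  then have "n I (carrier G) dvd n I I"
    by (rule n_dvd_if_dvd_power[OF I subgroup_self IC n_nonneg[OF I I subset_refl]])
  then have "n I (carrier G) dvd n I H"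
    using n_dvd_n_of_subset[OF I I H subset_refl IH] by (rule dvd_trans)
  ultimately show "n I H = n I (carrier G)"
    by (rule zdvd_antisym_nonneg[OF n_nonneg[OF H I IH] n_nonneg[OF subgroup_self I IC]])
qed

end
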